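(* Let $(M,P,g)\in\mathcal W_1$, $\dim M=2n\ge4$, and let $D$ be the connection in the context. If $D$ is flat (its curvature tensor vanishes), then the Weyl tensor $W=R-\frac{1}{2(n-1)}\{\psi_1(\rho)-\frac{\tau}{2n-1}\pi_1\}$ of $\nabla$ vanishes, i.e. $(M,g)$ is conformally flat.
   Context: A Riemannian almost product manifold $(M,P,g)$: smooth manifold with $(1,1)$-tensor $P$ and Riemannian metric $g$, $P^2=\mathrm{id}$, $g(Px,Py)=g(x,y)$; here $\operatorname{tr}P=0$. $\nabla$ is the Levi-Civita connection, $F(x,y,z)=g((\nabla_xP)y,z)$, Lee form $\theta(x)=g^{ij}F(e_i,e_j,x)$, $\Omega$ with $g(\Omega,x)=\theta(x)$. Class $\mathcal W_1$: $F(x,y,z)=\frac{1}{2n}\{g(x,y)\theta(z)+g(x,z)\theta(y)-g(x,Py)\theta(Pz)-g(x,Pz)\theta(Py)\}$. $D_xy=\nabla_xy+\frac{1}{2n}\{g(x,y)P\Omega-\theta(Py)x\}$. $R(x,y,z,w)=g(\nabla_x\nabla_yz-\nabla_y\nabla_xz-\nabla_{[x,y]}z,w)$, $\rho(y,z)=g^{ij}R(e_i,y,z,e_j)$, $\tau=g^{ij}\rho(e_i,e_j)$; $\psi_1(S)(x,y,z,w)=g(y,z)S(x,w)-g(x,z)S(y,w)+S(y,z)g(x,w)-S(x,z)g(y,w)$; $\pi_1(x,y,z,w)=g(y,z)g(x,w)-g(x,z)g(y,w)$. *)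

theory Defs
  imports "HOL-Analysis.Analysis"
begin

text \<open>Local-coordinate formalization. Coordinates on an open set U of real^'i.
  Tensor fields are given by their components:
  g x i j = g(e_i,e_j) at x;  P x k j = k-th component of P(e_j) at x;
  a connection with coefficients C: D_{e_i} e_j = sum_k C x k i j e_k.\<close>

definition pd :: "'i::finite \<Rightarrow> (real^'i \<Rightarrow> real) \<Rightarrow> real^'i \<Rightarrow> real" where
  "pd k f x = frechet_derivative f (at x) (axis k 1)"

fun iter_pd :: "'i::finite list \<Rightarrow> (real^'i \<Rightarrow> real) \<Rightarrow> real^'i \<Rightarrow> real" where
  "iter_pd [] f = f"
| "iter_pd (k # ks) f = pd k (iter_pd ks f)"

definition smooth_fun_on :: "(real^'i::finite) set \<Rightarrow> (real^'i \<Rightarrow> real) \<Rightarrow> bool" where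
  "smooth_fun_on U f \<longleftrightarrow> (\<forall>ks. iter_pd ks f differentiable_on U)"

definition ginv :: "(real^'i \<Rightarrow> 'i::finite \<Rightarrow> 'i \<Rightarrow> real) \<Rightarrow> real^'i \<Rightarrow> 'i \<Rightarrow> 'i \<Rightarrow> real" where
  "ginv g x i j = matrix_inv (\<chi> a b. g x a b) $ i $ j"

text \<open>Christoffel symbols of the Levi-Civita connection: christoffel g x k i j = Gamma^k_{ij}.\<close>
definition christoffel :: "(real^'i \<Rightarrow> 'i::finite \<Rightarrow> 'i \<Rightarrow> real) \<Rightarrow> real^'i \<Rightarrow> 'i \<Rightarrow> 'i \<Rightarrow> 'i \<Rightarrow> real" where
  "christoffel g x k i j = (1/2) * (\<Sum>l\<in>UNIV. ginv g x k l *
      (pd i (\<lambda>y. g y j l) x + pd j (\<lambda>y. g y i l) x - pd l (\<lambda>y. g y i j) x))"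

text \<open>(nabla_{e_i} P)^k_j\<close>
definition covP :: "(real^'i \<Rightarrow> 'i::finite \<Rightarrow> 'i \<Rightarrow> real) \<Rightarrow> (real^'i \<Rightarrow> 'i \<Rightarrow> 'i \<Rightarrow> real)
    \<Rightarrow> real^'i \<Rightarrow> 'i \<Rightarrow> 'i \<Rightarrow> 'i \<Rightarrow> real" where
  "covP g P x i k j = pd i (\<lambda>y. P y k j) x
      + (\<Sum>l\<in>UNIV. christoffel g x k i l * P x l j)
      - (\<Sum>l\<in>UNIV. christoffel g x l i j * P x k l)"

text \<open>F(e_i,e_j,e_l) = g((nabla_{e_i} P) e_j, e_l)\<close>
definition Ften :: "(real^'i \<Rightarrow> 'i::finite \<Rightarrow> 'i \<Rightarrow> real) \<Rightarrow> (real^'i \<Rightarrow> 'i \<Rightarrow> 'i \<Rightarrow> real)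
    \<Rightarrow> real^'i \<Rightarrow> 'i \<Rightarrow> 'i \<Rightarrow> 'i \<Rightarrow> real" where
  "Ften g P x i j l = (\<Sum>k\<in>UNIV. g x k l * covP g P x i k j)"

definition lee :: "(real^'i \<Rightarrow> 'i::finite \<Rightarrow> 'i \<Rightarrow> real) \<Rightarrow> (real^'i \<Rightarrow> 'i \<Rightarrow> 'i \<Rightarrow> real)
    \<Rightarrow> real^'i \<Rightarrow> 'i \<Rightarrow> real" where
  "lee g P x l = (\<Sum>i\<in>UNIV. \<Sum>j\<in>UNIV. ginv g x i j * Ften g P x i j l)"

definition leeP :: "(real^'i \<Rightarrow> 'i::finite \<Rightarrow> 'i \<Rightarrow> real) \<Rightarrow> (real^'i \<Rightarrow> 'i \<Rightarrow> 'i \<Rightarrow> real)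
    \<Rightarrow> real^'i \<Rightarrow> 'i \<Rightarrow> real" where
  "leeP g P x l = (\<Sum>a\<in>UNIV. lee g P x a * P x a l)"

definition gP :: "(real^'i \<Rightarrow> 'i::finite \<Rightarrow> 'i \<Rightarrow> real) \<Rightarrow> (real^'i \<Rightarrow> 'i \<Rightarrow> 'i \<Rightarrow> real)
    \<Rightarrow> real^'i \<Rightarrow> 'i \<Rightarrow> 'i \<Rightarrow> real" where
  "gP g P x i j = (\<Sum>a\<in>UNIV. g x i a * P x a j)"

definition Omega :: "(real^'i \<Rightarrow> 'i::finite \<Rightarrow> 'i \<Rightarrow> real) \<Rightarrow> (real^'i \<Rightarrow> 'i \<Rightarrow> 'i \<Rightarrow> real)
    \<Rightarrow> real^'i \<Rightarrow> 'i \<Rightarrow> real" where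
  "Omega g P x k = (\<Sum>l\<in>UNIV. ginv g x k l * lee g P x l)"

definition POmega :: "(real^'i \<Rightarrow> 'i::finite \<Rightarrow> 'i \<Rightarrow> real) \<Rightarrow> (real^'i \<Rightarrow> 'i \<Rightarrow> 'i \<Rightarrow> real)
    \<Rightarrow> real^'i \<Rightarrow> 'i \<Rightarrow> real" where
  "POmega g P x k = (\<Sum>a\<in>UNIV. P x k a * Omega g P x a)"

text \<open>Class W_1 (checked on coordinate basis vectors; all terms are tensorial).\<close>
definition in_W1 :: "nat \<Rightarrow> (real^'i::finite) set \<Rightarrow> (real^'i \<Rightarrow> 'i \<Rightarrow> 'i \<Rightarrow> real)
    \<Rightarrow> (real^'i \<Rightarrow> 'i \<Rightarrow> 'i \<Rightarrow> real) \<Rightarrow> bool" where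
  "in_W1 n U g P \<longleftrightarrow> (\<forall>x\<in>U. \<forall>i j l. Ften g P x i j l =
      (1 / (2 * real n)) * (g x i j * lee g P x l + g x i l * lee g P x j
        - gP g P x i j * leeP g P x l - gP g P x i l * leeP g P x j))"

definition connD :: "nat \<Rightarrow> (real^'i \<Rightarrow> 'i::finite \<Rightarrow> 'i \<Rightarrow> real) \<Rightarrow> (real^'i \<Rightarrow> 'i \<Rightarrow> 'i \<Rightarrow> real)
    \<Rightarrow> real^'i \<Rightarrow> 'i \<Rightarrow> 'i \<Rightarrow> 'i \<Rightarrow> real" where
  "connD n g P x k i j = christoffel g x k i j
      + (1 / (2 * real n)) * (g x i j * POmega g P x k - leeP g P x j * (if k = i then 1 else 0))"

text \<open>Curvature (1,3) components of a connection C: R(e_i,e_j)e_k = sum_m curv C x m i j k e_m,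
  with R(X,Y)Z = D_X D_Y Z - D_Y D_X Z - D_[X,Y] Z.\<close>
definition curv :: "(real^'i \<Rightarrow> 'i::finite \<Rightarrow> 'i \<Rightarrow> 'i \<Rightarrow> real) \<Rightarrow> real^'i \<Rightarrow> 'i \<Rightarrow> 'i \<Rightarrow> 'i \<Rightarrow> 'i \<Rightarrow> real" where
  "curv C x m i j k = pd i (\<lambda>y. C y m j k) x - pd j (\<lambda>y. C y m i k) x
      + (\<Sum>l\<in>UNIV. C x l j k * C x m i l - C x l i k * C x m j l)"

text \<open>R(e_i,e_j,e_k,e_l) = g(R(e_i,e_j)e_k, e_l) for the Levi-Civita connection\<close>
definition Riem :: "(real^'i \<Rightarrow> 'i::finite \<Rightarrow> 'i \<Rightarrow> real) \<Rightarrow> real^'i \<Rightarrow> 'i \<Rightarrow> 'i \<Rightarrow> 'i \<Rightarrow> 'i \<Rightarrow> real" where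
  "Riem g x i j k l = (\<Sum>m\<in>UNIV. g x m l * curv (christoffel g) x m i j k)"

definition ricci :: "(real^'i \<Rightarrow> 'i::finite \<Rightarrow> 'i \<Rightarrow> real) \<Rightarrow> real^'i \<Rightarrow> 'i \<Rightarrow> 'i \<Rightarrow> real" where
  "ricci g x j k = (\<Sum>i\<in>UNIV. \<Sum>l\<in>UNIV. ginv g x i l * Riem g x i j k l)"

definition scal :: "(real^'i \<Rightarrow> 'i::finite \<Rightarrow> 'i \<Rightarrow> real) \<Rightarrow> real^'i \<Rightarrow> real" where
  "scal g x = (\<Sum>j\<in>UNIV. \<Sum>k\<in>UNIV. ginv g x j k * ricci g x j k)"

definition psi1 :: "(real^'i \<Rightarrow> 'i::finite \<Rightarrow> 'i \<Rightarrow> real) \<Rightarrow> (real^'i \<Rightarrow> 'i \<Rightarrow> 'i \<Rightarrow> real)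
    \<Rightarrow> real^'i \<Rightarrow> 'i \<Rightarrow> 'i \<Rightarrow> 'i \<Rightarrow> 'i \<Rightarrow> real" where
  "psi1 g S x i j k l = g x j k * S x i l - g x i k * S x j l + S x j k * g x i l - S x i k * g x j l"

definition pi1 :: "(real^'i \<Rightarrow> 'i::finite \<Rightarrow> 'i \<Rightarrow> real) \<Rightarrow> real^'i \<Rightarrow> 'i \<Rightarrow> 'i \<Rightarrow> 'i \<Rightarrow> 'i \<Rightarrow> real" where
  "pi1 g x i j k l = g x j k * g x i l - g x i k * g x j l"

definition weyl :: "nat \<Rightarrow> (real^'i \<Rightarrow> 'i::finite \<Rightarrow> 'i \<Rightarrow> real) \<Rightarrow> real^'i \<Rightarrow> 'i \<Rightarrow> 'i \<Rightarrow> 'i \<Rightarrow> 'i \<Rightarrow> real" where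
  "weyl n g x i j k l = Riem g x i j k l
      - (1 / (2 * (real n - 1))) * (psi1 g (ricci g) x i j k l
          - (scal g x / (2 * real n - 1)) * pi1 g x i j k l)"

definition riem_almost_product :: "(real^'i::finite) set \<Rightarrow> (real^'i \<Rightarrow> 'i \<Rightarrow> 'i \<Rightarrow> real)
    \<Rightarrow> (real^'i \<Rightarrow> 'i \<Rightarrow> 'i \<Rightarrow> real) \<Rightarrow> bool" where
  "riem_almost_product U g P \<longleftrightarrow>
     open U
   \<and> (\<forall>i j. smooth_fun_on U (\<lambda>y. g y i j) \<and> smooth_fun_on U (\<lambda>y. P y i j))
   \<and> (\<forall>x\<in>U. \<forall>i j. g x i j = g x j i)
   \<and> (\<forall>x\<in>U. \<forall>v::real^'i. v \<noteq> 0 \<longrightarrow> (\<Sum>i\<in>UNIV. \<Sum>j\<in>UNIV. v$i * v$j * g x i j) > 0)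
   \<and> (\<forall>x\<in>U. \<forall>i k. (\<Sum>j\<in>UNIV. P x i j * P x j k) = (if i = k then 1 else 0))
   \<and> (\<forall>x\<in>U. \<forall>i j. (\<Sum>a\<in>UNIV. \<Sum>b\<in>UNIV. P x a i * P x b j * g x a b) = g x i j)
   \<and> (\<forall>x\<in>U. (\<Sum>i\<in>UNIV. P x i i) = 0)"

end

theory Submission
  imports Defs
begin

(* In the chart U the connection D is  D = \<nabla> + K  with the difference tensor
     K^m_ij = a (g_ij V^m - \<beta>_j \<delta>^m_i),   a = 1/(2n),  V = P\<Omega>,  \<beta> = \<theta>\<circ>P = g(V, .).
   Writing out the curvature of D and lowering the free index with g (using that \<nabla> is metric
   and torsion free) shows that flatness of D forces the Levi-Civita curvature into the form
     R = \<psi>1(S) + c \<pi>1,    S_iw = -(a (\<nabla>_i \<beta>)_w + a^2 \<beta>_i \<beta>_w),   c = a^2 \<beta>(V).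
   A purely algebraic contraction argument shows that every tensor of this shape, for an
   arbitrary bilinear form S, has Ricci tensor (2n-2) S + (tr S + c(2n-1)) g and hence vanishing
   Weyl part when dim = 2n \<ge> 4.  Only the special shape of D matters. *)

lemma mult_delta [simp]:
  "(x::real) * (if Q then 1 else 0) = (if Q then x else 0)"
  "(if Q then 1 else 0) * (x::real) = (if Q then x else 0)"
  by auto

lemma mult_if_zero [simp]:
  "(x::real) * (if Q then y else 0) = (if Q then x * y else 0)"
  "(if Q then y else 0) * (x::real) = (if Q then y * x else 0)"
  by auto

lemma sum_if_zero: "(\<Sum>b\<in>B. if Q then f b else 0) = (if Q then (\<Sum>b\<in>B. f b) else (0::real))"
  by simp

section \<open>Calculus of coordinate partial derivatives\<close>

lemma pd_eq_derivative: "(f has_derivative f') (at x) \<Longrightarrow> pd k f x = f' (axis k 1)"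
  unfolding pd_def by (metis frechet_derivative_at)

lemma has_frechet_derivative:
  "f differentiable (at x) \<Longrightarrow> (f has_derivative frechet_derivative f (at x)) (at x)"
  by (simp add: frechet_derivative_works)

lemma pd_const: "pd k (\<lambda>y. c) x = 0"
  by (simp add: pd_eq_derivative[OF has_derivative_const])

lemma pd_add: "f differentiable (at x) \<Longrightarrow> h differentiable (at x) \<Longrightarrow>
    pd k (\<lambda>y. f y + h y) x = pd k f x + pd k h x"
  by (subst pd_eq_derivative[OF has_derivative_add[OF has_frechet_derivative has_frechet_derivative]])
     (auto simp: pd_def)

lemma pd_diff: "f differentiable (at x) \<Longrightarrow> h differentiable (at x) \<Longrightarrow>
    pd k (\<lambda>y. f y - h y) x = pd k f x - pd k h x"
  by (subst pd_eq_derivative[OF has_derivative_diff[OF has_frechet_derivative has_frechet_derivative]])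
     (auto simp: pd_def)

lemma pd_mult: "f differentiable (at x) \<Longrightarrow> h differentiable (at x) \<Longrightarrow>
    pd k (\<lambda>y. f y * h y) x = pd k f x * h x + f x * pd k h x"
  by (subst pd_eq_derivative[OF has_derivative_mult[OF has_frechet_derivative has_frechet_derivative]])
     (auto simp: pd_def)

lemma pd_const_mult: "f differentiable (at x) \<Longrightarrow> pd k (\<lambda>y. c * f y) x = c * pd k f x"
  by (subst pd_eq_derivative[OF has_derivative_mult[OF has_derivative_const has_frechet_derivative]])
     (auto simp: pd_def)

lemma pd_sum: "finite A \<Longrightarrow> (\<And>a. a \<in> A \<Longrightarrow> f a differentiable (at x)) \<Longrightarrow>
    pd k (\<lambda>y. \<Sum>a\<in>A. f a y) x = (\<Sum>a\<in>A. pd k (f a) x)"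
  by (subst pd_eq_derivative[OF has_derivative_sum[OF has_frechet_derivative]]) (auto simp: pd_def)

lemma pd_cong: "f differentiable (at x) \<Longrightarrow> open U \<Longrightarrow> x \<in> U \<Longrightarrow> (\<And>y. y \<in> U \<Longrightarrow> f y = h y)
    \<Longrightarrow> pd k f x = pd k h x"
  unfolding pd_def using frechet_derivative_transform_within_open by metis

lemma differentiable_transform_open:
  assumes "f differentiable (at x)" "open S" "x \<in> S" "\<And>y. y \<in> S \<Longrightarrow> f y = h y"
  shows "h differentiable (at x)"
  using assms unfolding differentiable_def by (metis has_derivative_transform_within_open)

lemma differentiable_sum_UNIV:
  "(\<And>a. f a differentiable F) \<Longrightarrow> (\<lambda>x. \<Sum>a\<in>(UNIV::'k::finite set). f a x) differentiable F"
  by (rule differentiable_sum) auto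

lemmas differentiable_poly_intros = differentiable_sum_UNIV differentiable_mult differentiable_add
  differentiable_diff differentiable_const

lemma differentiable_prod_fun:
  fixes f :: "'j \<Rightarrow> 'a::real_normed_vector \<Rightarrow> real"
  assumes "\<And>i. i \<in> I \<Longrightarrow> f i differentiable (at x)"
  shows "(\<lambda>x. \<Prod>i\<in>I. f i x) differentiable (at x)"
proof -
  obtain D where "\<forall>i\<in>I. (f i has_derivative D i) (at x)"
    using assms unfolding differentiable_def by metis
  then show ?thesis unfolding differentiable_def using has_derivative_prod[of I f D x UNIV] by blast
qed

text \<open>The determinant is a polynomial in the entries, hence differentiable.\<close>

lemma det_differentiable:
  fixes F :: "real^'i::finite \<Rightarrow> 'i \<Rightarrow> 'i \<Rightarrow> real"
  assumes "\<And>a b. (\<lambda>y. F y a b) differentiable (at x)"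
  shows "(\<lambda>y. det (\<chi> a b. F y a b)) differentiable (at x)"
  unfolding det_def vec_lambda_beta
  by (intro differentiable_sum ballI differentiable_mult differentiable_const
      differentiable_prod_fun assms) (simp add: finite_permutations)

section \<open>Inverse of a positive definite matrix\<close>

lemma posdef_invertible:
  fixes A :: "real^'i::finite^'i"
  assumes "\<forall>v::real^'i. v \<noteq> 0 \<longrightarrow> (\<Sum>i\<in>UNIV. \<Sum>j\<in>UNIV. v$i * v$j * A$i$j) > 0"
  shows "invertible A"
proof -
  have "v = 0" if kernel: "A *v v = 0" for v
  proof -
    have "(\<Sum>i\<in>UNIV. \<Sum>j\<in>UNIV. v$i * v$j * A$i$j) = (\<Sum>i\<in>UNIV. v$i * (A *v v)$i)"
      by (simp add: matrix_vector_mult_def sum_distrib_left mult_ac)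
    also have "\<dots> = 0" using kernel by simp
    finally show "v = 0" using assms by force
  qed
  then show ?thesis unfolding invertible_left_inverse matrix_left_invertible_ker by blast
qed

lemma matrix_inv_products:
  fixes A :: "real^'i::finite^'i"
  assumes "invertible A"
  shows "A ** matrix_inv A = mat 1" "matrix_inv A ** A = mat 1"
  using assms unfolding invertible_def matrix_inv_def by (metis (mono_tags, lifting) someI_ex)+

text \<open>Cramer's rule: every entry of the inverse is a quotient of determinants.  This is what
  makes the inverse metric a differentiable function of the point.\<close>

lemma matrix_inv_entry_cramer:
  fixes A :: "real^'i::finite^'i"
  assumes "invertible A"
  shows "matrix_inv A $ i $ j = det (\<chi> a b. if b = i then (if a = j then 1 else 0) else A$a$b) / det A"
proof -
  have det_nz: "det A \<noteq> 0" using assms invertible_det_nz by blast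
  let ?x = "matrix_inv A *v axis j 1"
  have "A *v ?x = axis j 1"
    by (simp add: matrix_vector_mul_assoc matrix_inv_products[OF assms])
  then have "?x $ i = det (\<chi> a b. if b = i then (axis j 1)$a else A$a$b) / det A"
    using cramer[OF det_nz] by simp
  moreover have "?x $ i = matrix_inv A $ i $ j"
    by (simp add: matrix_vector_mult_def axis_def if_distrib cong: if_cong)
  moreover have "(\<chi> a b. if b = i then (axis j 1)$a else A$a$b)
      = (\<chi> a b. if b = i then (if a = j then 1 else 0) else A$a$b)"
    by (intro arg_cong[where f = vec_lambda] ext) (simp add: axis_def)
  ultimately show ?thesis by simp
qed

lemma matrix_inv_entry_sums:
  fixes A :: "real^'i::finite^'i"
  assumes "invertible A"
  shows "(\<Sum>b\<in>UNIV. A$a$b * matrix_inv A $ b $ c) = (if a = c then 1 else 0)"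
    and "(\<Sum>b\<in>UNIV. matrix_inv A $ a $ b * A $ b $ c) = (if a = c then 1 else 0)"
  using arg_cong[OF matrix_inv_products(1)[OF assms], of "\<lambda>M. M $ a $ c"]
    arg_cong[OF matrix_inv_products(2)[OF assms], of "\<lambda>M. M $ a $ c"]
  by (simp_all add: matrix_matrix_mult_def mat_def)

section \<open>The Riemannian almost product structure on a chart\<close>

definition deform :: "nat \<Rightarrow> (real^'i \<Rightarrow> 'i::finite \<Rightarrow> 'i \<Rightarrow> real) \<Rightarrow> (real^'i \<Rightarrow> 'i \<Rightarrow> 'i \<Rightarrow> real)
    \<Rightarrow> real^'i \<Rightarrow> 'i \<Rightarrow> 'i \<Rightarrow> 'i \<Rightarrow> real" where
  "deform n g P y k i j =
     (1 / (2 * real n)) * (g y i j * POmega g P y k - leeP g P y j * (if k = i then 1 else 0))"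

lemma connD_split: "connD n g P y k i j = christoffel g y k i j + deform n g P y k i j"
  unfolding connD_def deform_def by simp

locale ap_chart =
  fixes U :: "(real^'i::finite) set" and g P :: "real^'i \<Rightarrow> 'i \<Rightarrow> 'i \<Rightarrow> real"
  assumes rap: "riem_almost_product U g P"
begin

lemma open_U: "open U"
  using rap unfolding riem_almost_product_def by blast

lemma g_sym: "x \<in> U \<Longrightarrow> g x i j = g x j i"
  using rap unfolding riem_almost_product_def by blast

lemma P_square: "x \<in> U \<Longrightarrow> (\<Sum>j\<in>UNIV. P x i j * P x j k) = (if i = k then 1 else 0)"
  using rap unfolding riem_almost_product_def by blast

lemma P_isometry: "x \<in> U \<Longrightarrow> (\<Sum>a\<in>UNIV. \<Sum>b\<in>UNIV. P x a i * P x b j * g x a b) = g x i j"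
  using rap unfolding riem_almost_product_def by blast

lemma g_invertible: "x \<in> U \<Longrightarrow> invertible (\<chi> a b. g x a b)"
  by (rule posdef_invertible) (use rap in \<open>simp add: riem_almost_product_def\<close>)

lemma g_ginv: "x \<in> U \<Longrightarrow> (\<Sum>b\<in>UNIV. g x a b * ginv g x b c) = (if a = c then 1 else 0)"
  using matrix_inv_entry_sums(1)[OF g_invertible, of x a c] by (simp add: ginv_def)

lemma ginv_g: "x \<in> U \<Longrightarrow> (\<Sum>b\<in>UNIV. ginv g x a b * g x b c) = (if a = c then 1 else 0)"
  using matrix_inv_entry_sums(2)[OF g_invertible, of x a c] by (simp add: ginv_def)

text \<open>Smoothness of g and P gives differentiability of their components and of their first
  derivatives, which is all the curvature computation needs.\<close>

lemma smooth_differentiable: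
  "smooth_fun_on U f \<Longrightarrow> x \<in> U \<Longrightarrow> iter_pd ks f differentiable (at x)"
  unfolding smooth_fun_on_def differentiable_on_eq_differentiable_at[OF open_U] by blast

lemma g_differentiable: "x \<in> U \<Longrightarrow> (\<lambda>y. g y i j) differentiable (at x)"
  using smooth_differentiable[of "\<lambda>y. g y i j" x "[]"] rap unfolding riem_almost_product_def by simp

lemma P_differentiable: "x \<in> U \<Longrightarrow> (\<lambda>y. P y i j) differentiable (at x)"
  using smooth_differentiable[of "\<lambda>y. P y i j" x "[]"] rap unfolding riem_almost_product_def by simp

lemma dg_differentiable: "x \<in> U \<Longrightarrow> (\<lambda>y. pd k (\<lambda>z. g z i j) y) differentiable (at x)"
  using smooth_differentiable[of "\<lambda>y. g y i j" x "[k]"] rap unfolding riem_almost_product_def by simp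

lemma dP_differentiable: "x \<in> U \<Longrightarrow> (\<lambda>y. pd k (\<lambda>z. P z i j) y) differentiable (at x)"
  using smooth_differentiable[of "\<lambda>y. P y i j" x "[k]"] rap unfolding riem_almost_product_def by simp

lemma ginv_differentiable:
  assumes x: "x \<in> U"
  shows "(\<lambda>y. ginv g y i j) differentiable (at x)"
proof -
  define cramer where "cramer y =
    det (\<chi> a b. if b = i then (if a = j then 1 else 0) else g y a b) / det (\<chi> a b. g y a b)" for y
  have "cramer differentiable (at x)"
    unfolding cramer_def
  proof (rule differentiable_divide)
    show "(\<lambda>y. det (\<chi> a b. if b = i then if a = j then 1 else 0 else g y a b)) differentiable (at x)"
    proof (rule det_differentiable)
      fix a b
      show "(\<lambda>y. if b = i then if a = j then 1 else 0 else g y a b) differentiable (at x)"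
        by (cases "b = i") (simp_all add: g_differentiable x)
    qed
    show "(\<lambda>y. det (\<chi> a b. g y a b)) differentiable (at x)"
      by (rule det_differentiable) (simp add: g_differentiable x)
    show "det (\<chi> a b. g x a b) \<noteq> 0"
      using g_invertible[OF x] invertible_det_nz by blast
  qed
  moreover have "cramer y = ginv g y i j" if "y \<in> U" for y
    using matrix_inv_entry_cramer[OF g_invertible[OF that], of i j]
    by (simp only: vec_lambda_beta ginv_def cramer_def)
  ultimately show ?thesis by (rule differentiable_transform_open[OF _ open_U x])
qed

lemma christoffel_differentiable: "x \<in> U \<Longrightarrow> (\<lambda>y. christoffel g y k i j) differentiable (at x)"
  unfolding christoffel_def by (intro differentiable_poly_intros ginv_differentiable dg_differentiable)

lemma covP_differentiable: "x \<in> U \<Longrightarrow> (\<lambda>y. covP g P y i k j) differentiable (at x)"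
  unfolding covP_def
  by (intro differentiable_poly_intros christoffel_differentiable dP_differentiable P_differentiable)

lemma Ften_differentiable: "x \<in> U \<Longrightarrow> (\<lambda>y. Ften g P y i j l) differentiable (at x)"
  unfolding Ften_def by (intro differentiable_poly_intros covP_differentiable g_differentiable)

lemma lee_differentiable: "x \<in> U \<Longrightarrow> (\<lambda>y. lee g P y l) differentiable (at x)"
  unfolding lee_def by (intro differentiable_poly_intros Ften_differentiable ginv_differentiable)

lemma leeP_differentiable: "x \<in> U \<Longrightarrow> (\<lambda>y. leeP g P y l) differentiable (at x)"
  unfolding leeP_def by (intro differentiable_poly_intros lee_differentiable P_differentiable)

lemma Omega_differentiable: "x \<in> U \<Longrightarrow> (\<lambda>y. Omega g P y l) differentiable (at x)"
  unfolding Omega_def by (intro differentiable_poly_intros lee_differentiable ginv_differentiable)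

lemma POmega_differentiable: "x \<in> U \<Longrightarrow> (\<lambda>y. POmega g P y l) differentiable (at x)"
  unfolding POmega_def by (intro differentiable_poly_intros Omega_differentiable P_differentiable)

lemma deform_differentiable: "x \<in> U \<Longrightarrow> (\<lambda>y. deform n g P y k i j) differentiable (at x)"
  unfolding deform_def
  by (intro differentiable_poly_intros POmega_differentiable leeP_differentiable g_differentiable)

lemma P_g_symmetric:
  assumes y: "y \<in> U"
  shows "(\<Sum>m\<in>UNIV. g y m w * P y m a) = (\<Sum>b\<in>UNIV. g y a b * P y b w)"
proof -
  have "(\<Sum>m\<in>UNIV. g y m w * P y m a)
      = (\<Sum>m\<in>UNIV. (\<Sum>c\<in>UNIV. \<Sum>b\<in>UNIV. P y c m * P y b w * g y c b) * P y m a)"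
    using P_isometry[OF y] by simp
  also have "\<dots> = (\<Sum>m\<in>UNIV. \<Sum>c\<in>UNIV. \<Sum>b\<in>UNIV. P y c m * P y m a * (P y b w * g y c b))"
    by (simp add: sum_distrib_left sum_distrib_right mult_ac)
  also have "\<dots> = (\<Sum>c\<in>UNIV. \<Sum>b\<in>UNIV. \<Sum>m\<in>UNIV. P y c m * P y m a * (P y b w * g y c b))"
    by (subst sum.swap) (intro sum.cong refl sum.swap)
  also have "\<dots> = (\<Sum>c\<in>UNIV. \<Sum>b\<in>UNIV. (\<Sum>m\<in>UNIV. P y c m * P y m a) * (P y b w * g y c b))"
    by (simp add: sum_distrib_right)
  also have "\<dots> = (\<Sum>b\<in>UNIV. g y a b * P y b w)"
    by (simp add: P_square[OF y] sum_if_zero mult.commute)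
  finally show ?thesis .
qed

lemma g_Omega:
  assumes y: "y \<in> U"
  shows "(\<Sum>a\<in>UNIV. g y b a * Omega g P y a) = lee g P y b"
proof -
  have "(\<Sum>a\<in>UNIV. g y b a * Omega g P y a) = (\<Sum>l\<in>UNIV. \<Sum>a\<in>UNIV. g y b a * ginv g y a l * lee g P y l)"
    by (simp add: Omega_def sum_distrib_left mult_ac) (rule sum.swap)
  also have "\<dots> = (\<Sum>l\<in>UNIV. (\<Sum>a\<in>UNIV. g y b a * ginv g y a l) * lee g P y l)"
    by (simp add: sum_distrib_right)
  finally show ?thesis by (simp add: g_ginv[OF y])
qed

lemma leeP_eq_lowered_POmega:
  assumes y: "y \<in> U"
  shows "leeP g P y w = (\<Sum>m\<in>UNIV. g y m w * POmega g P y m)"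
proof -
  have "(\<Sum>m\<in>UNIV. g y m w * POmega g P y m) = (\<Sum>a\<in>UNIV. (\<Sum>m\<in>UNIV. g y m w * P y m a) * Omega g P y a)"
    by (simp add: POmega_def sum_distrib_left sum_distrib_right mult_ac) (rule sum.swap)
  also have "\<dots> = (\<Sum>a\<in>UNIV. \<Sum>b\<in>UNIV. P y b w * (g y b a * Omega g P y a))"
    by (simp only: P_g_symmetric[OF y]) (simp add: g_sym[OF y] sum_distrib_left sum_distrib_right mult_ac)
  also have "\<dots> = (\<Sum>b\<in>UNIV. P y b w * (\<Sum>a\<in>UNIV. g y b a * Omega g P y a))"
    by (subst sum.swap) (simp add: sum_distrib_left)
  also have "\<dots> = leeP g P y w"
    by (simp add: g_Omega[OF y] leeP_def mult_ac)
  finally show ?thesis by simp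
qed

lemma dg_sym: "x \<in> U \<Longrightarrow> pd l (\<lambda>y. g y i j) x = pd l (\<lambda>y. g y j i) x"
  by (rule pd_cong[OF g_differentiable open_U]) (auto simp: g_sym)

lemma christoffel_sym: "x \<in> U \<Longrightarrow> christoffel g x k i j = christoffel g x k j i"
  unfolding christoffel_def by (simp add: dg_sym[of x _ i j] add.commute)

lemma christoffel_lowered:
  assumes x: "x \<in> U"
  shows "(\<Sum>l\<in>UNIV. christoffel g x l i j * g x l k)
       = (1/2) * (pd i (\<lambda>y. g y j k) x + pd j (\<lambda>y. g y i k) x - pd k (\<lambda>y. g y i j) x)"
proof -
  define X where "X m = pd i (\<lambda>y. g y j m) x + pd j (\<lambda>y. g y i m) x - pd m (\<lambda>y. g y i j) x" for m
  have "(\<Sum>l\<in>UNIV. christoffel g x l i j * g x l k)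
      = (\<Sum>m\<in>UNIV. \<Sum>l\<in>UNIV. (1/2) * (g x k l * ginv g x l m * X m))"
    unfolding christoffel_def X_def
    by (simp add: sum_distrib_left sum_distrib_right g_sym[OF x, of _ k] mult_ac) (rule sum.swap)
  also have "\<dots> = (\<Sum>m\<in>UNIV. (1/2) * ((\<Sum>l\<in>UNIV. g x k l * ginv g x l m) * X m))"
    by (simp add: sum_distrib_left sum_distrib_right)
  also have "\<dots> = (1/2) * X k" by (simp add: g_ginv[OF x])
  finally show ?thesis by (simp add: X_def)
qed

lemma metric_compatible:
  assumes x: "x \<in> U"
  shows "pd i (\<lambda>y. g y j k) x = (\<Sum>l\<in>UNIV. christoffel g x l i j * g x l k + christoffel g x l i k * g x j l)"
  using christoffel_lowered[OF x, of i j k] christoffel_lowered[OF x, of i k j] dg_sym[OF x, of i j k]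
  by (simp add: sum.distrib g_sym[OF x, of j] algebra_simps)

lemma pd_deform:
  assumes x: "x \<in> U"
  shows "pd i (\<lambda>y. deform n g P y m j k) x = (1 / (2 * real n)) *
     (pd i (\<lambda>y. g y j k) x * POmega g P x m + g x j k * pd i (\<lambda>y. POmega g P y m) x
      - pd i (\<lambda>y. leeP g P y k) x * (if m = j then 1 else 0))"
proof -
  note diff = g_differentiable[OF x] POmega_differentiable[OF x] leeP_differentiable[OF x]
  have "pd i (\<lambda>y. g y j k * POmega g P y m - leeP g P y k * (if m = j then 1 else 0)) x
      = pd i (\<lambda>y. g y j k * POmega g P y m) x - pd i (\<lambda>y. leeP g P y k * (if m = j then 1 else 0)) x"
    by (rule pd_diff) (intro differentiable_poly_intros diff)+
  also have "\<dots> = pd i (\<lambda>y. g y j k) x * POmega g P x m + g x j k * pd i (\<lambda>y. POmega g P y m) x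
      - pd i (\<lambda>y. leeP g P y k) x * (if m = j then 1 else 0)"
    by (cases "m = j") (simp_all add: pd_mult pd_const diff del: mult_delta)
  finally show ?thesis
    unfolding deform_def
    by (subst pd_const_mult) (intro differentiable_poly_intros diff, simp)
qed

lemma pd_leeP:
  assumes x: "x \<in> U"
  shows "pd i (\<lambda>y. leeP g P y w) x
       = (\<Sum>m\<in>UNIV. pd i (\<lambda>y. g y m w) x * POmega g P x m + g x m w * pd i (\<lambda>y. POmega g P y m) x)"
proof -
  have "pd i (\<lambda>y. leeP g P y w) x = pd i (\<lambda>y. \<Sum>m\<in>UNIV. g y m w * POmega g P y m) x"
    by (rule pd_cong[OF leeP_differentiable[OF x] open_U x]) (simp add: leeP_eq_lowered_POmega)
  also have "\<dots> = (\<Sum>m\<in>UNIV. pd i (\<lambda>y. g y m w * POmega g P y m) x)"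
    by (rule pd_sum) (auto intro!: differentiable_poly_intros g_differentiable POmega_differentiable x)
  also have "\<dots> = (\<Sum>m\<in>UNIV. pd i (\<lambda>y. g y m w) x * POmega g P x m + g x m w * pd i (\<lambda>y. POmega g P y m) x)"
    by (intro sum.cong refl pd_mult g_differentiable POmega_differentiable x)
  finally show ?thesis .
qed

lemma curv_connD_split:
  assumes x: "x \<in> U"
  shows "curv (connD n g P) x m i j k = curv (christoffel g) x m i j k
     + pd i (\<lambda>y. deform n g P y m j k) x - pd j (\<lambda>y. deform n g P y m i k) x
     + (\<Sum>l\<in>UNIV. christoffel g x l j k * deform n g P x m i l + deform n g P x l j k * christoffel g x m i l
          + deform n g P x l j k * deform n g P x m i l
          - christoffel g x l i k * deform n g P x m j l - deform n g P x l i k * christoffel g x m j l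
          - deform n g P x l i k * deform n g P x m j l)"
proof -
  have pd_split: "pd a (\<lambda>y. connD n g P y m b k) x
      = pd a (\<lambda>y. christoffel g y m b k) x + pd a (\<lambda>y. deform n g P y m b k) x" for a b
    unfolding connD_split by (rule pd_add[OF christoffel_differentiable[OF x] deform_differentiable[OF x]])
  show ?thesis
    unfolding curv_def pd_split by (simp add: connD_split sum.distrib sum_subtractf algebra_simps)
qed

end

section \<open>Pointwise algebra: the curvature forced by flatness of  \<nabla> + K\<close>

text \<open>All data at one point: metric gg, Christoffel symbols Gm of a torsion free metric
  connection, a vector V with metric dual \<beta>, the difference tensor
  K^m_ij = a (g_ij V^m - \<beta>_j \<delta>^m_i), and the first derivatives dg, dV, d\<beta>, dK
  (first index = direction of differentiation), related by the product rule.\<close>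

locale flat_deformation =
  fixes gg :: "'i::finite \<Rightarrow> 'i \<Rightarrow> real" and Gm :: "'i \<Rightarrow> 'i \<Rightarrow> 'i \<Rightarrow> real"
    and V \<beta> :: "'i \<Rightarrow> real" and dg :: "'i \<Rightarrow> 'i \<Rightarrow> 'i \<Rightarrow> real"
    and dV d\<beta> :: "'i \<Rightarrow> 'i \<Rightarrow> real" and a :: real
    and K :: "'i \<Rightarrow> 'i \<Rightarrow> 'i \<Rightarrow> real" and dK :: "'i \<Rightarrow> 'i \<Rightarrow> 'i \<Rightarrow> 'i \<Rightarrow> real"
  assumes sym: "\<And>a b. gg a b = gg b a"
    and Gm_sym: "\<And>l i j. Gm l i j = Gm l j i"
    and compat: "\<And>i j k. dg i j k = (\<Sum>l\<in>UNIV. Gm l i j * gg l k + Gm l i k * gg j l)"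
    and \<beta>_dual: "\<And>k. \<beta> k = (\<Sum>m\<in>UNIV. gg m k * V m)"
    and d\<beta>_eq: "\<And>i k. d\<beta> i k = (\<Sum>m\<in>UNIV. dg i m k * V m + gg m k * dV i m)"
    and K_eq: "\<And>m i j. K m i j = a * (gg i j * V m - \<beta> j * (if m = i then 1 else 0))"
    and dK_eq: "\<And>i m j k. dK i m j k =
                  a * (dg i j k * V m + gg j k * dV i m - d\<beta> i k * (if m = j then 1 else 0))"
begin

text \<open>Christoffel symbols of the first kind, and the contractions of \<Gamma> with V and \<beta>;
  d\<beta>_iw - Gamma_beta_iw is the covariant derivative (\<nabla>_i \<beta>)_w.\<close>

definition "Gamma_low i l w = (\<Sum>m\<in>UNIV. Gm m i l * gg m w)"
definition "Gamma_V i w = (\<Sum>m\<in>UNIV. Gamma_low i m w * V m)"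
definition "Gamma_beta i w = (\<Sum>l\<in>UNIV. Gm l i w * \<beta> l)"
definition "beta_V = (\<Sum>l\<in>UNIV. \<beta> l * V l)"

lemma Gamma_low_sym: "Gamma_low i j k = Gamma_low j i k"
  unfolding Gamma_low_def by (simp add: Gm_sym)

lemma compat_low: "dg i j k = Gamma_low i j k + Gamma_low i k j"
  unfolding compat Gamma_low_def by (simp add: sum.distrib sym mult_ac)

lemma \<beta>_dual': "(\<Sum>m\<in>UNIV. gg m k * V m) = \<beta> k"
  using \<beta>_dual by simp

lemma \<beta>_dual'': "(\<Sum>m\<in>UNIV. V m * gg k m) = \<beta> k"
  using \<beta>_dual by (simp add: sym mult_ac)

lemma Gamma_low_contract: "(\<Sum>m\<in>UNIV. gg m w * Gm m i l) = Gamma_low i l w"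
  unfolding Gamma_low_def by (simp add: mult_ac)

lemma lowered_dV: "(\<Sum>m\<in>UNIV. gg m w * dV i m) = d\<beta> i w - Gamma_V i w - Gamma_beta i w"
proof -
  have "(\<Sum>m\<in>UNIV. dg i m w * V m)
      = (\<Sum>m\<in>UNIV. Gamma_low i m w * V m) + (\<Sum>m\<in>UNIV. \<Sum>l\<in>UNIV. Gm l i w * (gg m l * V m))"
    by (simp add: compat_low Gamma_low_def sum.distrib sum_distrib_right sum_distrib_left
        algebra_simps sym)
  also have "(\<Sum>m\<in>UNIV. \<Sum>l\<in>UNIV. Gm l i w * (gg m l * V m)) = (\<Sum>l\<in>UNIV. \<Sum>m\<in>UNIV. Gm l i w * (gg m l * V m))"
    by (rule sum.swap)
  also have "(\<Sum>m\<in>UNIV. Gamma_low i m w * V m) + \<dots> = Gamma_V i w + Gamma_beta i w"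
    unfolding Gamma_V_def Gamma_beta_def by (simp add: sum_distrib_left[symmetric] \<beta>_dual')
  finally show ?thesis using d\<beta>_eq[of i w] by (simp add: sum.distrib)
qed

lemma lowered_dK:
  "(\<Sum>m\<in>UNIV. gg m w * dK i m j k)
     = a * (dg i j k * \<beta> w + gg j k * (d\<beta> i w - Gamma_V i w - Gamma_beta i w) - d\<beta> i k * gg j w)"
proof -
  have "(\<Sum>m\<in>UNIV. gg m w * dK i m j k) = a * (dg i j k * (\<Sum>m\<in>UNIV. gg m w * V m)
      + gg j k * (\<Sum>m\<in>UNIV. gg m w * dV i m) - d\<beta> i k * gg j w)"
    by (simp add: dK_eq sum.distrib sum_subtractf sum_distrib_left algebra_simps)
  then show ?thesis by (simp add: \<beta>_dual' lowered_dV)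
qed

lemma lowered_K: "(\<Sum>m\<in>UNIV. gg m w * K m i l) = a * (gg i l * \<beta> w - \<beta> l * gg i w)"
proof -
  have "(\<Sum>m\<in>UNIV. gg m w * K m i l)
      = (\<Sum>m\<in>UNIV. (a * gg i l) * (gg m w * V m) - (a * \<beta> l) * (gg m w * (if m = i then 1 else 0)))"
    by (rule sum.cong[OF refl]) (simp add: K_eq algebra_simps)
  also have "\<dots> = (a * gg i l) * (\<Sum>m\<in>UNIV. gg m w * V m) - (a * \<beta> l) * gg i w"
    by (simp add: sum_subtractf sum_distrib_left[symmetric])
  finally show ?thesis unfolding \<beta>_dual' by (simp add: algebra_simps)
qed

lemma lowered_Gamma_K:
  "(\<Sum>m\<in>UNIV. gg m w * (\<Sum>l\<in>UNIV. Gm l j k * K m i l)) = a * (Gamma_low j k i * \<beta> w - gg i w * Gamma_beta j k)"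
proof -
  have "(\<Sum>m\<in>UNIV. gg m w * (\<Sum>l\<in>UNIV. Gm l j k * K m i l))
      = (\<Sum>l\<in>UNIV. Gm l j k * (\<Sum>m\<in>UNIV. gg m w * K m i l))"
    by (simp add: sum_distrib_left mult_ac) (rule sum.swap)
  also have "\<dots> = a * \<beta> w * (\<Sum>l\<in>UNIV. Gm l j k * gg l i) - a * gg i w * (\<Sum>l\<in>UNIV. Gm l j k * \<beta> l)"
    by (simp add: lowered_K sum_subtractf sum_distrib_left sym[of i] algebra_simps)
  also have "\<dots> = a * (Gamma_low j k i * \<beta> w - gg i w * Gamma_beta j k)"
    by (simp add: Gamma_low_def Gamma_beta_def algebra_simps)
  finally show ?thesis .
qed

lemma lowered_K_Gamma:
  "(\<Sum>m\<in>UNIV. gg m w * (\<Sum>l\<in>UNIV. K l j k * Gm m i l)) = a * (gg j k * Gamma_V i w - \<beta> k * Gamma_low i j w)"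
proof -
  have "(\<Sum>m\<in>UNIV. gg m w * (\<Sum>l\<in>UNIV. K l j k * Gm m i l)) = (\<Sum>l\<in>UNIV. K l j k * Gamma_low i l w)"
    by (simp add: sum_distrib_left mult_ac Gamma_low_contract[symmetric]) (rule sum.swap)
  also have "\<dots> = (\<Sum>l\<in>UNIV. (a * gg j k) * (Gamma_low i l w * V l)
                    - (a * \<beta> k) * (Gamma_low i l w * (if l = j then 1 else 0)))"
    by (rule sum.cong[OF refl]) (simp add: K_eq algebra_simps)
  also have "\<dots> = (a * gg j k) * (\<Sum>l\<in>UNIV. Gamma_low i l w * V l) - (a * \<beta> k) * Gamma_low i j w"
    by (simp add: sum_subtractf sum_distrib_left[symmetric])
  also have "\<dots> = a * (gg j k * Gamma_V i w - \<beta> k * Gamma_low i j w)"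
    by (simp add: Gamma_V_def algebra_simps)
  finally show ?thesis .
qed

lemma lowered_K_K:
  "(\<Sum>m\<in>UNIV. gg m w * (\<Sum>l\<in>UNIV. K l j k * K m i l))
     = a * a * (gg j k * \<beta> i * \<beta> w - gg j k * beta_V * gg i w - \<beta> k * gg i j * \<beta> w + \<beta> k * \<beta> j * gg i w)"
proof -
  have "(\<Sum>m\<in>UNIV. gg m w * (\<Sum>l\<in>UNIV. K l j k * K m i l)) = (\<Sum>l\<in>UNIV. K l j k * (\<Sum>m\<in>UNIV. gg m w * K m i l))"
    by (simp only: sum_distrib_left) (subst sum.swap, simp add: mult_ac)
  also have "\<dots> = (\<Sum>l\<in>UNIV. K l j k * (a * (gg i l * \<beta> w - \<beta> l * gg i w)))"
    by (simp only: lowered_K)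
  also have "\<dots> = (\<Sum>l\<in>UNIV. (a * a * gg j k * \<beta> w) * (V l * gg i l) - (a * a * gg j k * gg i w) * (\<beta> l * V l)
         - (a * a * \<beta> k) * ((gg i l * \<beta> w - \<beta> l * gg i w) * (if l = j then 1 else 0)))"
    by (rule sum.cong[OF refl]) (simp add: K_eq algebra_simps)
  also have "\<dots> = (a * a * gg j k * \<beta> w) * (\<Sum>l\<in>UNIV. V l * gg i l) - (a * a * gg j k * gg i w) * beta_V
         - (a * a * \<beta> k) * (gg i j * \<beta> w - \<beta> j * gg i w)"
    by (simp add: sum_subtractf sum_distrib_left[symmetric] beta_V_def del: mult_delta mult_if_zero)
       (simp add: if_distrib cong: if_cong)
  also have "\<dots> = a * a * (gg j k * \<beta> i * \<beta> w - gg j k * beta_V * gg i w - \<beta> k * gg i j * \<beta> w + \<beta> k * \<beta> j * gg i w)"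
    by (simp add: \<beta>_dual'' algebra_simps)
  finally show ?thesis .
qed

definition "S_form i w = -(a * (d\<beta> i w - Gamma_beta i w) + a * a * \<beta> i * \<beta> w)"

lemma flat_curvature_shape:
  fixes Rc :: "'i \<Rightarrow> real"
  assumes flat: "\<And>m. 0 = Rc m + dK i m j k - dK j m i k
      + (\<Sum>l\<in>UNIV. Gm l j k * K m i l + K l j k * Gm m i l + K l j k * K m i l
          - Gm l i k * K m j l - K l i k * Gm m j l - K l i k * K m j l)"
  shows "(\<Sum>m\<in>UNIV. gg m w * Rc m)
      = gg j k * S_form i w - gg i k * S_form j w + S_form j k * gg i w - S_form i k * gg j w
        + a * a * beta_V * (gg j k * gg i w - gg i k * gg j w)"
proof -
  have Rc_eq: "Rc m = -(dK i m j k - dK j m i k + (\<Sum>l\<in>UNIV. Gm l j k * K m i l) + (\<Sum>l\<in>UNIV. K l j k * Gm m i l)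
      + (\<Sum>l\<in>UNIV. K l j k * K m i l) - (\<Sum>l\<in>UNIV. Gm l i k * K m j l) - (\<Sum>l\<in>UNIV. K l i k * Gm m j l)
      - (\<Sum>l\<in>UNIV. K l i k * K m j l))" for m
    using flat[of m] unfolding sum.distrib sum_subtractf by linarith
  have "(\<Sum>m\<in>UNIV. gg m w * Rc m) = -((\<Sum>m\<in>UNIV. gg m w * dK i m j k) - (\<Sum>m\<in>UNIV. gg m w * dK j m i k)
      + (\<Sum>m\<in>UNIV. gg m w * (\<Sum>l\<in>UNIV. Gm l j k * K m i l)) + (\<Sum>m\<in>UNIV. gg m w * (\<Sum>l\<in>UNIV. K l j k * Gm m i l))
      + (\<Sum>m\<in>UNIV. gg m w * (\<Sum>l\<in>UNIV. K l j k * K m i l)) - (\<Sum>m\<in>UNIV. gg m w * (\<Sum>l\<in>UNIV. Gm l i k * K m j l))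
      - (\<Sum>m\<in>UNIV. gg m w * (\<Sum>l\<in>UNIV. K l i k * Gm m j l))
      - (\<Sum>m\<in>UNIV. gg m w * (\<Sum>l\<in>UNIV. K l i k * K m j l)))"
    by (simp only: Rc_eq sum.distrib sum_subtractf distrib_left right_diff_distrib mult_minus_right sum_negf)
  also have "\<dots> = gg j k * S_form i w - gg i k * S_form j w + S_form j k * gg i w - S_form i k * gg j w
      + a * a * beta_V * (gg j k * gg i w - gg i k * gg j w)"
    unfolding lowered_dK lowered_Gamma_K lowered_K_Gamma lowered_K_K S_form_def compat_low
    by (simp add: Gamma_low_sym[of j i] sym[of j i] algebra_simps)
  finally show ?thesis .
qed

end

section \<open>Pointwise algebra: tensors of the form \<psi>1(S) + c \<pi>1 are Weyl free\<close>

locale metric_algebra =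
  fixes gg gi :: "'i::finite \<Rightarrow> 'i \<Rightarrow> real"
  assumes sym: "\<And>a b. gg a b = gg b a"
    and gg_gi: "\<And>a c. (\<Sum>b\<in>UNIV. gg a b * gi b c) = (if a = c then 1 else 0)"
    and gi_gg: "\<And>a c. (\<Sum>b\<in>UNIV. gi a b * gg b c) = (if a = c then 1 else 0)"
begin

definition "metric_trace S = (\<Sum>i\<in>UNIV. \<Sum>l\<in>UNIV. gi i l * S i l)"

definition "shape S c i j k w = gg j k * S i w - gg i k * S j w + S j k * gg i w - S i k * gg j w
   + c * (gg j k * gg i w - gg i k * gg j w)"

definition "shape_ricci S c j k = (\<Sum>i\<in>UNIV. \<Sum>l\<in>UNIV. gi i l * shape S c i j k l)"

lemma contract_scalar: "(\<Sum>i\<in>UNIV. \<Sum>l\<in>UNIV. gi i l * (X * S i l)) = X * metric_trace S"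
  unfolding metric_trace_def by (simp add: sum_distrib_left mult_ac)

lemma contract_first: "(\<Sum>i\<in>UNIV. \<Sum>l\<in>UNIV. gi i l * (gg i k * S j l)) = S j k"
proof -
  have "(\<Sum>i\<in>UNIV. \<Sum>l\<in>UNIV. gi i l * (gg i k * S j l)) = (\<Sum>l\<in>UNIV. \<Sum>i\<in>UNIV. gi i l * (gg i k * S j l))"
    by (rule sum.swap)
  also have "\<dots> = (\<Sum>l\<in>UNIV. (\<Sum>i\<in>UNIV. gg k i * gi i l) * S j l)"
    by (simp add: sum_distrib_right sum_distrib_left sym[of _ k] mult_ac)
  finally show ?thesis by (simp add: gg_gi)
qed

lemma contract_metric: "(\<Sum>i\<in>UNIV. \<Sum>l\<in>UNIV. gi i l * (X * gg i l)) = X * real CARD('i)"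
proof -
  have "(\<Sum>l\<in>UNIV. gi i l * (X * gg i l)) = X * (\<Sum>l\<in>UNIV. gi i l * gg l i)" for i
    by (simp add: sum_distrib_left sym[of i] mult_ac)
  then show ?thesis by (simp add: gi_gg)
qed

lemma contract_second: "(\<Sum>i\<in>UNIV. \<Sum>l\<in>UNIV. gi i l * (S i k * gg j l)) = S j k"
proof -
  have "(\<Sum>i\<in>UNIV. \<Sum>l\<in>UNIV. gi i l * (S i k * gg j l)) = (\<Sum>i\<in>UNIV. S i k * (\<Sum>l\<in>UNIV. gi i l * gg l j))"
    by (simp add: sum_distrib_left sym[of j] mult_ac)
  then show ?thesis by (simp add: gi_gg)
qed

lemma contract_metric_pair: "(\<Sum>i\<in>UNIV. \<Sum>l\<in>UNIV. gi i l * (X * gg i k * gg j l)) = X * gg j k"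
proof -
  have "(\<Sum>i\<in>UNIV. \<Sum>l\<in>UNIV. gi i l * (X * gg i k * gg j l)) = (\<Sum>i\<in>UNIV. X * gg i k * (\<Sum>l\<in>UNIV. gi i l * gg l j))"
    by (simp add: sum_distrib_left sym[of j] mult_ac)
  also have "\<dots> = X * gg j k" by (simp add: gi_gg)
  finally show ?thesis .
qed

lemma metric_trace_gg: "metric_trace gg = real CARD('i)"
  unfolding metric_trace_def using contract_metric[of 1] by simp

lemma shape_ricci_eq:
  "shape_ricci S c j k = (real CARD('i) - 2) * S j k + (metric_trace S + c * (real CARD('i) - 1)) * gg j k"
proof -
  have "shape_ricci S c j k
      = (\<Sum>i\<in>UNIV. \<Sum>l\<in>UNIV. gi i l * (gg j k * S i l)) - (\<Sum>i\<in>UNIV. \<Sum>l\<in>UNIV. gi i l * (gg i k * S j l))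
      + (\<Sum>i\<in>UNIV. \<Sum>l\<in>UNIV. gi i l * (S j k * gg i l)) - (\<Sum>i\<in>UNIV. \<Sum>l\<in>UNIV. gi i l * (S i k * gg j l))
      + (\<Sum>i\<in>UNIV. \<Sum>l\<in>UNIV. gi i l * ((c * gg j k) * gg i l))
      - (\<Sum>i\<in>UNIV. \<Sum>l\<in>UNIV. gi i l * (c * gg i k * gg j l))"
    unfolding shape_ricci_def shape_def
    by (simp only: sum.distrib sum_subtractf distrib_left right_diff_distrib) (simp add: mult_ac)
  then show ?thesis
    unfolding contract_scalar contract_first contract_metric contract_second contract_metric_pair
    by (simp add: algebra_simps metric_trace_gg)
qed

lemma shape_scalar_eq: "(\<Sum>j\<in>UNIV. \<Sum>k\<in>UNIV. gi j k * shape_ricci S c j k) =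
   (real CARD('i) - 2) * metric_trace S + (metric_trace S + c * (real CARD('i) - 1)) * real CARD('i)"
proof -
  have "(\<Sum>j\<in>UNIV. \<Sum>k\<in>UNIV. gi j k * shape_ricci S c j k)
      = (\<Sum>j\<in>UNIV. \<Sum>k\<in>UNIV. gi j k * ((real CARD('i) - 2) * S j k))
        + (\<Sum>j\<in>UNIV. \<Sum>k\<in>UNIV. gi j k * ((metric_trace S + c * (real CARD('i) - 1)) * gg j k))"
    unfolding shape_ricci_eq by (simp only: sum.distrib distrib_left)
  then show ?thesis unfolding contract_scalar contract_metric by (simp add: metric_trace_gg)
qed

lemma clear_denominators:
  fixes X Y Z W d1 d2 :: real
  assumes "d1 \<noteq> 0" "d2 \<noteq> 0" "d1 * d2 * X = d2 * Y - Z * W"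
  shows "X - (1 / d1) * (Y - (Z / d2) * W) = 0"
proof -
  have "X = (d2 * Y - Z * W) / (d1 * d2)" using assms by (simp add: field_simps)
  then show ?thesis using assms by (simp add: field_simps)
qed

lemma shape_weyl_free:
  assumes N: "real CARD('i) = 2 * real n" and n2: "n \<ge> 2"
  shows "shape S c i j k l - (1 / (2 * (real n - 1))) *
     ((gg j k * shape_ricci S c i l - gg i k * shape_ricci S c j l
       + shape_ricci S c j k * gg i l - shape_ricci S c i k * gg j l)
      - ((\<Sum>j\<in>UNIV. \<Sum>k\<in>UNIV. gi j k * shape_ricci S c j k) / (2 * real n - 1))
        * (gg j k * gg i l - gg i k * gg j l)) = 0"
proof (rule clear_denominators)
  show "2 * (real n - 1) \<noteq> 0" "2 * real n - 1 \<noteq> 0" using n2 by auto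
  show "2 * (real n - 1) * (2 * real n - 1) * shape S c i j k l =
    (2 * real n - 1) * (gg j k * shape_ricci S c i l - gg i k * shape_ricci S c j l
      + shape_ricci S c j k * gg i l - shape_ricci S c i k * gg j l) -
    (\<Sum>j\<in>UNIV. \<Sum>k\<in>UNIV. gi j k * shape_ricci S c j k) * (gg j k * gg i l - gg i k * gg j l)"
    unfolding shape_scalar_eq unfolding shape_ricci_eq shape_def N by (simp add: algebra_simps)
qed

end

section \<open>Flatness of D forces conformal flatness\<close>

context ap_chart
begin

lemma flat_D_curvature_shape:
  assumes x: "x \<in> U"
    and flat: "\<forall>m i j k. curv (connD n g P) x m i j k = 0"
  shows "\<exists>S c. \<forall>i j k w. Riem g x i j k w =
     g x j k * S i w - g x i k * S j w + S j k * g x i w - S i k * g x j w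
     + c * (g x j k * g x i w - g x i k * g x j w)"
proof -
  interpret pt: flat_deformation "g x" "christoffel g x" "POmega g P x" "leeP g P x"
    "\<lambda>i j k. pd i (\<lambda>y. g y j k) x" "\<lambda>i m. pd i (\<lambda>y. POmega g P y m) x"
    "\<lambda>i k. pd i (\<lambda>y. leeP g P y k) x" "1 / (2 * real n)"
    "deform n g P x" "\<lambda>i m j k. pd i (\<lambda>y. deform n g P y m j k) x"
    by unfold_locales
      (rule g_sym[OF x] christoffel_sym[OF x] metric_compatible[OF x] leeP_eq_lowered_POmega[OF x]
        pd_leeP[OF x] pd_deform[OF x] deform_def)+
  have "Riem g x i j k w = g x j k * pt.S_form i w - g x i k * pt.S_form j w
      + pt.S_form j k * g x i w - pt.S_form i k * g x j w
      + 1 / (2 * real n) * (1 / (2 * real n)) * pt.beta_V * (g x j k * g x i w - g x i k * g x j w)"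
    for i j k w
    unfolding Riem_def
    by (rule pt.flat_curvature_shape) (use curv_connD_split[OF x, of n _ i j k] flat in simp)
  then show ?thesis by blast
qed

lemma weyl_vanishes_of_shape:
  assumes x: "x \<in> U" and dim: "CARD('i) = 2 * n" and n2: "n \<ge> 2"
    and R: "\<forall>i j k w. Riem g x i j k w =
      g x j k * S i w - g x i k * S j w + S j k * g x i w - S i k * g x j w
      + c * (g x j k * g x i w - g x i k * g x j w)"
  shows "weyl n g x i j k l = 0"
proof -
  interpret pt: metric_algebra "g x" "ginv g x"
    by unfold_locales (rule g_sym[OF x] g_ginv[OF x] ginv_g[OF x])+
  have Riem_eq: "Riem g x i' j' k' w = pt.shape S c i' j' k' w" for i' j' k' w
    using R unfolding pt.shape_def by simp
  have ricci_eq: "ricci g x j' k' = pt.shape_ricci S c j' k'" for j' k'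
    unfolding ricci_def pt.shape_ricci_def Riem_eq ..
  have scal_eq: "scal g x = (\<Sum>j\<in>UNIV. \<Sum>k\<in>UNIV. ginv g x j k * pt.shape_ricci S c j k)"
    unfolding scal_def ricci_eq ..
  show ?thesis
    using pt.shape_weyl_free[of n S c i j k l] dim n2
    unfolding weyl_def psi1_def pi1_def scal_eq ricci_eq Riem_eq by simp
qed

end

theorem proposition7p1:
  fixes U :: "(real^'i::finite) set"
    and g P :: "real^'i \<Rightarrow> 'i \<Rightarrow> 'i \<Rightarrow> real"
    and n :: nat
  assumes dim: "CARD('i) = 2 * n" and n2: "n \<ge> 2"
    and rap: "riem_almost_product U g P"
    and W1: "in_W1 n U g P"
    and flat: "\<forall>x\<in>U. \<forall>m i j k. curv (connD n g P) x m i j k = 0"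
  shows "\<forall>x\<in>U. \<forall>i j k l. weyl n g x i j k l = 0"
proof (intro ballI allI)
  fix x i j k l
  assume x: "x \<in> U"
  interpret ap_chart U g P by (rule ap_chart.intro[OF rap])
  obtain S c where "\<forall>i j k w. Riem g x i j k w =
      g x j k * S i w - g x i k * S j w + S j k * g x i w - S i k * g x j w
      + c * (g x j k * g x i w - g x i k * g x j w)"
    using flat_D_curvature_shape[OF x] flat x by blast
  then show "weyl n g x i j k l = 0"
    by (rule weyl_vanishes_of_shape[OF x dim n2])
qed

end
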